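(* Under the standing assumptions below, let $\kappa>0$, $\tau\ge L_{\nabla P_\rho}+\kappa$, $\alpha_y\in(0,1/(L_{\nabla P_\rho}+\tau))$, $\alpha_x\in(0,1/L_{\nabla\vartheta})$, and let the iterates be generated by PG-MAD. Then for $k=0,\dots,K-1$, with $w^k=(x^k,z^k,u^k,v^k)$, $$\frac{1-\alpha_xL_{\nabla\vartheta}}{4\alpha_x}\|w^{k+1}-w^k\|^2\le\vartheta(w^k)-\vartheta(w^{k+1})+\frac{2\alpha_x(L_{\nabla f}^2+\rho^2L_{\nabla g}^2+\tau^2)}{\kappa(1-\alpha_xL_{\nabla\vartheta})}(1-\kappa\alpha_y)^T\Delta_k.$$
   Context: Standing setting. $\mathcal X\subset\mathbb R^{d_x}$, $\mathcal Y\subset\mathbb R^{d_y}$, $\Lambda\subset\mathbb R^{d_\lambda}$ are nonempty convex compact sets. $f(x,y,\lambda):=\bar f(x,y)+\lambda^T(Ax+By-c)$ with $\bar f$ continuously differentiable; $L_{\nabla f}>0$ is a Lipschitz constant of $\nabla f$ on $\mathcal X\times\mathcal Y\times\Lambda$. $g$ is continuously differentiable, $\nabla g$ is $L_{\nabla g}$-Lipschitz on $\mathcal Y\times\Lambda$, $g(\cdot,\lambda)$ is convex for each $\lambda\in\Lambda$, and $g$ has a saddle point $(z^*,\lambda^* )\in\mathcal Y\times\Lambda$: $g(z^*,\lambda^* )=\max_{\lambda\in\Lambda}\min_{z\in\mathcal Y}g(z,\lambda)=\min_{z\in\mathcal Y}\max_{\lambda\in\Lambda}g(z,\lambda)$.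 For $\rho>0$: $P_\rho(x,y,\lambda,z):=f(x,y,\lambda)-\rho(g(y,\lambda)-g(z,\lambda))$, $L_{\nabla P_\rho}:=L_{\nabla f}+2\rho L_{\nabla g}$; $Q(x,z,u,v,y,\lambda):=P_\rho(x,y,\lambda,z)-\frac\tau2\|(y,\lambda)-(u,v)\|^2$; $\vartheta(x,z,u,v):=\max_{y\in\mathcal Y,\lambda\in\Lambda}Q(x,z,u,v,y,\lambda)$; $L_{\nabla\vartheta}:=(L_{\nabla f}+\rho L_{\nabla g}+2\tau)(1+(L_{\nabla P_\rho}+\tau)\kappa^{-1})$. $\mathrm{proj}_C$ is Euclidean projection; $\nabla_1g$ is the gradient of $g$ in its first argument. PG-MAD: given $\rho,\kappa>0$, $\tau\ge L_{\nabla P_\rho}+\kappa$, $\alpha_x,\alpha_y>0$, integers $T,K>1$, and $x^0\in\mathcal X$, $z^0,y^0\in\mathcal Y$, $\lambda^0\in\Lambda$, $u^0\in\mathbb R^{d_y}$, $v^0\in\mathbb R^{d_\lambda}$: for $k=0,\dots,K-1$, set $(y^{[0]}(k),\lambda^{[0]}(k))=(y^k,\lambda^k)$; for $t=0,\dots,T-1$, $y^{[t+1]}(k)=\mathrm{proj}_{\mathcal Y}[y^{[t]}(k)+\alpha_y\nabla_yQ(x^k,z^k,u^k,v^k,y^{[t]}(k),\lambda^{[t]}(k))]$, $\lambda^{[t+1]}(k)=\mathrm{proj}_{\Lambda}[\lambda^{[t]}(k)+\alpha_y\nabla_\lambda Q(x^k,z^k,u^k,v^k,y^{[t]}(k),\lambda^{[t]}(k))]$;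 set $(y^{k+1},\lambda^{k+1})=(y^{[T]}(k),\lambda^{[T]}(k))$; then $x^{k+1}=\mathrm{proj}_{\mathcal X}[x^k-\alpha_x\nabla_xf(x^k,y^{k+1},\lambda^{k+1})]$, $z^{k+1}=\mathrm{proj}_{\mathcal Y}[z^k-\alpha_x\rho\nabla_1g(z^k,\lambda^{k+1})]$, $u^{k+1}=(1+\alpha_x\tau)u^k-\alpha_x\tau y^{k+1}$, $v^{k+1}=(1+\alpha_x\tau)v^k-\alpha_x\tau\lambda^{k+1}$. Notation: $Q^{(k)}(y,\lambda):=Q(x^k,z^k,u^k,v^k,y,\lambda)$; $\Delta_k:=\vartheta(x^k,z^k,u^k,v^k)-Q^{(k)}(y^k,\lambda^k)$. *)

theory Defs
  imports "HOL-Analysis.Analysis"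
begin

definition grad :: "('a::euclidean_space \<Rightarrow> real) \<Rightarrow> 'a \<Rightarrow> 'a" where
  "grad F p = (SOME v. (F has_derivative (\<lambda>h. v \<bullet> h)) (at p))"

definition cont_diff :: "('a::euclidean_space \<Rightarrow> real) \<Rightarrow> bool" where
  "cont_diff F \<longleftrightarrow> (\<forall>p. F differentiable (at p)) \<and> continuous_on UNIV (grad F)"

definition fobj :: "('x::euclidean_space \<times> 'y::euclidean_space \<Rightarrow> real) \<Rightarrow> ('x \<Rightarrow> 'l::euclidean_space)
   \<Rightarrow> ('y \<Rightarrow> 'l) \<Rightarrow> 'l \<Rightarrow> 'x \<times> 'y \<times> 'l \<Rightarrow> real" where
  "fobj fbar A B c p = fbar (fst p, fst (snd p)) + snd (snd p) \<bullet> (A (fst p) + B (fst (snd p)) - c)"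

definition Prho :: "('x::euclidean_space \<times> 'y::euclidean_space \<Rightarrow> real) \<Rightarrow> ('x \<Rightarrow> 'l::euclidean_space)
   \<Rightarrow> ('y \<Rightarrow> 'l) \<Rightarrow> 'l \<Rightarrow> ('y \<times> 'l \<Rightarrow> real) \<Rightarrow> real \<Rightarrow> 'x \<Rightarrow> 'y \<Rightarrow> 'l \<Rightarrow> 'y \<Rightarrow> real" where
  "Prho fbar A B c g \<rho> x y l z = fobj fbar A B c (x, y, l) - \<rho> * (g (y, l) - g (z, l))"

definition Qfun :: "('x::euclidean_space \<times> 'y::euclidean_space \<Rightarrow> real) \<Rightarrow> ('x \<Rightarrow> 'l::euclidean_space)
   \<Rightarrow> ('y \<Rightarrow> 'l) \<Rightarrow> 'l \<Rightarrow> ('y \<times> 'l \<Rightarrow> real) \<Rightarrow> real \<Rightarrow> real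
   \<Rightarrow> 'x \<Rightarrow> 'y \<Rightarrow> 'y \<Rightarrow> 'l \<Rightarrow> 'y \<Rightarrow> 'l \<Rightarrow> real" where
  "Qfun fbar A B c g \<rho> \<tau> x z u v y l =
     Prho fbar A B c g \<rho> x y l z - \<tau> / 2 * (norm ((y, l) - (u, v)))\<^sup>2"

definition vartheta :: "('x::euclidean_space \<times> 'y::euclidean_space \<Rightarrow> real) \<Rightarrow> ('x \<Rightarrow> 'l::euclidean_space)
   \<Rightarrow> ('y \<Rightarrow> 'l) \<Rightarrow> 'l \<Rightarrow> ('y \<times> 'l \<Rightarrow> real) \<Rightarrow> real \<Rightarrow> real \<Rightarrow> 'y set \<Rightarrow> 'l set
   \<Rightarrow> 'x \<times> 'y \<times> 'y \<times> 'l \<Rightarrow> real" where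
  "vartheta fbar A B c g \<rho> \<tau> Y \<Lambda> w =
     (SUP p \<in> Y \<times> \<Lambda>. Qfun fbar A B c g \<rho> \<tau> (fst w) (fst (snd w)) (fst (snd (snd w)))
                         (snd (snd (snd w))) (fst p) (snd p))"

end

theory Submission
  imports Defs
begin

text \<open>Write \<open>Q(w, p)\<close> with \<open>w = (x, z, u, v)\<close> and \<open>p = (y, \<lambda>)\<close>. Since
  \<open>\<tau> \<ge> L\<^sub>P + \<kappa>\<close>, the proximal term makes \<open>Q(w, \<cdot>)\<close> \<open>\<kappa>\<close>-strongly concave and
  \<open>(L\<^sub>P + \<tau>)\<close>-smooth on \<open>Y \<times> \<Lambda>\<close> for every \<open>w\<close>, and both partial gradients of \<open>Q\<close> are
  Lipschitz. Hence the \<open>T\<close> inner projected gradient ascent steps contract the gap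
  \<open>\<Delta>\<^sub>k\<close> by \<open>(1 - \<kappa> \<alpha>\<^sub>y)\<^sup>T\<close>. Strong concavity also gives quadratic growth around the
  maximiser \<open>p*(w)\<close>, which makes \<open>p*\<close> Lipschitz in \<open>w\<close>, so \<open>\<theta>(w) = Q(w, p*(w))\<close>
  satisfies a descent lemma along the projected gradient step in \<open>w\<close>. That step uses the
  inexact maximiser \<open>p\<^sup>k\<^sup>+\<^sup>1\<close> instead of \<open>p*(w\<^sup>k)\<close>; quadratic growth bounds the
  squared error by \<open>4/\<kappa>\<close> times the remaining gap, and Young's inequality trades it against
  the descent.\<close>

section \<open>Gradients and quadratic bounds\<close>

lemma grad_has_derivative:
  fixes F :: "'a::euclidean_space \<Rightarrow> real"
  assumes "F differentiable (at p)"
  shows "(F has_derivative (\<lambda>h. grad F p \<bullet> h)) (at p)"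
proof -
  obtain D where D: "(F has_derivative D) (at p)"
    using assms by (auto simp: differentiable_def)
  have "D = (\<lambda>h. adjoint D 1 \<bullet> h)"
    using adjoint_works[OF has_derivative_linear[OF D], of _ 1] by (auto simp: inner_commute)
  with D have "\<exists>v. (F has_derivative (\<lambda>h. v \<bullet> h)) (at p)" by metis
  then show ?thesis unfolding grad_def by (rule someI_ex)
qed

lemma grad_eqI:
  fixes F :: "'a::euclidean_space \<Rightarrow> real"
  assumes "(F has_derivative (\<lambda>h. v \<bullet> h)) (at p)"
  shows "grad F p = v"
proof -
  have "(F has_derivative (\<lambda>h. grad F p \<bullet> h)) (at p)"
    using assms by (intro grad_has_derivative) (auto simp: differentiable_def)
  from has_derivative_unique[OF this assms]
  have "grad F p \<bullet> (grad F p - v) = v \<bullet> (grad F p - v)" by metis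
  then have "(grad F p - v) \<bullet> (grad F p - v) = 0" by (simp add: inner_diff_left)
  then show ?thesis by simp
qed

lemma DERIV_increment_le_quadratic:
  fixes h h' :: "real \<Rightarrow> real"
  assumes der: "\<And>s. 0 \<le> s \<Longrightarrow> s \<le> 1 \<Longrightarrow> (h has_real_derivative h' s) (at s)"
    and bound: "\<And>s. 0 \<le> s \<Longrightarrow> s \<le> 1 \<Longrightarrow> h' s - h' 0 \<le> C * s"
  shows "h 1 - h 0 \<le> h' 0 + C / 2"
proof -
  define \<phi> where "\<phi> s = h s - s * h' 0 - C * s\<^sup>2 / 2" for s
  have "(\<phi> has_real_derivative (h' s - h' 0 - C * s)) (at s)" if "0 \<le> s" "s \<le> 1" for s
    unfolding \<phi>_def by (rule derivative_eq_intros der[OF that] refl | simp)+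
  from MVT2[of 0 1 \<phi>, OF _ this] obtain \<xi> where "0 < \<xi>" "\<xi> < 1"
    and "\<phi> 1 - \<phi> 0 = h' \<xi> - h' 0 - C * \<xi>" by auto
  with bound[of \<xi>] have "\<phi> 1 - \<phi> 0 \<le> 0" by auto
  then show ?thesis unfolding \<phi>_def by simp
qed

lemma norm_fst_diff_le: "norm (fst a - fst b) \<le> norm (a - b)"
  using dist_fst_le[of a b] by (simp add: dist_norm)

lemma norm_snd_diff_le: "norm (snd a - snd b) \<le> norm (a - b)"
  using dist_snd_le[of a b] by (simp add: dist_norm)

lemma norm_components_le:
  "norm (x' - x) \<le> norm ((x', z', u') - (x, z, u))"
  "norm (z' - z) \<le> norm ((x', z', u') - (x, z, u))"
  "norm (u' - u) \<le> norm ((x', z', u') - (x, z, u))"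
  using norm_fst_diff_le[of "(x', z', u')" "(x, z, u)"]
    order_trans[OF norm_fst_diff_le norm_snd_diff_le, of "(x', z', u')" "(x, z, u)"]
    order_trans[OF norm_snd_diff_le norm_snd_diff_le, of "(x', z', u')" "(x, z, u)"]
  by simp_all

lemma segment_in_convex:
  assumes "convex S" "p \<in> S" "q \<in> S" "0 \<le> s" "s \<le> 1"
  shows "p + s *\<^sub>R (q - p) \<in> S"
  using convexD_alt[OF assms] by (simp add: algebra_simps)

lemma has_real_derivative_along_line:
  fixes \<phi> :: "'a::real_inner \<Rightarrow> real"
  assumes "(\<phi> has_derivative (\<lambda>h. G (p + s *\<^sub>R d) \<bullet> h)) (at (p + s *\<^sub>R d))"
  shows "((\<lambda>s. \<phi> (p + s *\<^sub>R d)) has_real_derivative G (p + s *\<^sub>R d) \<bullet> d) (at s)"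
proof -
  have "((\<lambda>s. p + s *\<^sub>R d) has_derivative (\<lambda>t. t *\<^sub>R d)) (at s)"
    by (auto intro!: derivative_eq_intros)
  from has_derivative_compose[OF this assms] show ?thesis
    unfolding has_field_derivative_def by (rule has_derivative_eq_rhs) (auto simp: fun_eq_iff)
qed

lemma gradient_monotone_quadratic_bound:
  fixes \<phi> :: "'a::real_inner \<Rightarrow> real"
  assumes S: "convex S" "p \<in> S" "q \<in> S"
    and deriv: "\<And>u. u \<in> S \<Longrightarrow> (\<phi> has_derivative (\<lambda>h. G u \<bullet> h)) (at u)"
    and mono: "\<And>u v. u \<in> S \<Longrightarrow> v \<in> S \<Longrightarrow> (G u - G v) \<bullet> (u - v) \<le> C * (norm (u - v))\<^sup>2"
  shows "\<phi> q \<le> \<phi> p + G p \<bullet> (q - p) + C / 2 * (norm (q - p))\<^sup>2"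
proof -
  define d where "d = q - p"
  define h' where "h' s = G (p + s *\<^sub>R d) \<bullet> d" for s
  have on_segment: "p + s *\<^sub>R d \<in> S" if "0 \<le> s" "s \<le> 1" for s
    unfolding d_def using segment_in_convex[OF S that] .
  have "h' s - h' 0 \<le> (C * (norm d)\<^sup>2) * s" if s: "0 \<le> s" "s \<le> 1" for s
  proof (cases "s = 0")
    case False
    with s have "0 < s" by simp
    have "s * (h' s - h' 0) = (G (p + s *\<^sub>R d) - G p) \<bullet> ((p + s *\<^sub>R d) - p)"
      by (simp add: h'_def inner_diff_left)
    also have "\<dots> \<le> C * (norm ((p + s *\<^sub>R d) - p))\<^sup>2"
      using mono on_segment[OF s] S(2) by blast
    also have "\<dots> = s * ((C * (norm d)\<^sup>2) * s)"
      using \<open>0 < s\<close> by (simp add: power2_eq_square)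
    finally show ?thesis using \<open>0 < s\<close> by simp
  qed simp
  moreover have "((\<lambda>s. \<phi> (p + s *\<^sub>R d)) has_real_derivative h' s) (at s)" if "0 \<le> s" "s \<le> 1" for s
    unfolding h'_def by (rule has_real_derivative_along_line deriv on_segment that)+
  ultimately have "\<phi> (p + 1 *\<^sub>R d) - \<phi> (p + 0 *\<^sub>R d) \<le> h' 0 + C * (norm d)\<^sup>2 / 2"
    by (intro DERIV_increment_le_quadratic[where h = "\<lambda>s. \<phi> (p + s *\<^sub>R d)"])
  then show ?thesis by (simp add: h'_def d_def)
qed

lemma increment_difference_bound:
  fixes \<phi> \<psi> :: "'a::real_inner \<Rightarrow> real"
  assumes S: "convex S" "p \<in> S" "q \<in> S"
    and deriv: "\<And>u. u \<in> S \<Longrightarrow> (\<phi> has_derivative (\<lambda>h. G u \<bullet> h)) (at u)"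
      "\<And>u. u \<in> S \<Longrightarrow> (\<psi> has_derivative (\<lambda>h. H u \<bullet> h)) (at u)"
    and close: "\<And>u. u \<in> S \<Longrightarrow> norm (G u - H u) \<le> e"
  shows "(\<phi> q - \<phi> p) - (\<psi> q - \<psi> p) \<le> e * norm (q - p)"
proof -
  define d where "d = q - p"
  have on_segment: "p + s *\<^sub>R d \<in> S" if "0 \<le> s" "s \<le> 1" for s
    unfolding d_def using segment_in_convex[OF S that] .
  have "((\<lambda>s. \<phi> (p + s *\<^sub>R d) - \<psi> (p + s *\<^sub>R d)) has_real_derivative
      (G (p + s *\<^sub>R d) - H (p + s *\<^sub>R d)) \<bullet> d) (at s)" if "0 \<le> s" "s \<le> 1" for s
    unfolding inner_diff_left
    by (intro DERIV_diff has_real_derivative_along_line deriv on_segment that)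
  from MVT2[of 0 1, OF _ this] obtain \<xi> where \<xi>: "0 < \<xi>" "\<xi> < 1"
    and increment: "(\<phi> (p + 1 *\<^sub>R d) - \<psi> (p + 1 *\<^sub>R d)) - (\<phi> (p + 0 *\<^sub>R d) - \<psi> (p + 0 *\<^sub>R d))
       = (G (p + \<xi> *\<^sub>R d) - H (p + \<xi> *\<^sub>R d)) \<bullet> d"
    by auto
  have "(\<phi> q - \<phi> p) - (\<psi> q - \<psi> p) = (G (p + \<xi> *\<^sub>R d) - H (p + \<xi> *\<^sub>R d)) \<bullet> d"
    using increment by (simp add: d_def)
  also have "\<dots> \<le> norm (G (p + \<xi> *\<^sub>R d) - H (p + \<xi> *\<^sub>R d)) * norm d"
    by (rule norm_cauchy_schwarz)
  also have "\<dots> \<le> e * norm d"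
    using close on_segment \<xi> by (intro mult_right_mono) auto
  finally show ?thesis by (simp add: d_def)
qed

lemma mult_le_young:
  fixes x y \<epsilon> :: real
  assumes "0 < \<epsilon>"
  shows "x * y \<le> \<epsilon> / 2 * y\<^sup>2 + x\<^sup>2 / (2 * \<epsilon>)"
proof -
  have "0 \<le> (\<epsilon> * y - x)\<^sup>2" by simp
  then show ?thesis using assms by (simp add: field_simps power2_eq_square)
qed

section \<open>Projected gradient ascent\<close>

lemma strongly_concave_maximizer_growth:
  fixes \<phi> :: "'a::real_inner \<Rightarrow> real"
  assumes S: "convex S" "ps \<in> S" "q \<in> S" and max: "\<forall>p\<in>S. \<phi> p \<le> \<phi> ps"
    and concave: "\<And>p q. p \<in> S \<Longrightarrow> q \<in> S \<Longrightarrow>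
      \<phi> q \<le> \<phi> p + G p \<bullet> (q - p) - \<kappa> / 2 * (norm (q - p))\<^sup>2"
  shows "\<kappa> / 4 * (norm (q - ps))\<^sup>2 \<le> \<phi> ps - \<phi> q"
proof -
  \<comment> \<open>Compare \<open>ps\<close> and \<open>q\<close> with their midpoint, where the two gradient terms cancel.\<close>
  define m where "m = ps + (1/2) *\<^sub>R (q - ps)"
  have "m \<in> S" unfolding m_def by (rule segment_in_convex) (use S in auto)
  have to_ps: "ps - m = - ((1/2) *\<^sub>R (q - ps))"
    by (simp add: m_def)
  have "q - m = (1 - 1/2) *\<^sub>R (q - ps)"
    unfolding m_def scaleR_left_diff_distrib by simp
  then have to_q: "q - m = (1/2) *\<^sub>R (q - ps)" by simp
  have "\<phi> ps \<le> \<phi> m - (1/2) * (G m \<bullet> (q - ps)) - \<kappa> / 8 * (norm (q - ps))\<^sup>2"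
    using concave[OF \<open>m \<in> S\<close> S(2)] unfolding to_ps by (simp add: power2_eq_square)
  moreover have "\<phi> q \<le> \<phi> m + (1/2) * (G m \<bullet> (q - ps)) - \<kappa> / 8 * (norm (q - ps))\<^sup>2"
    using concave[OF \<open>m \<in> S\<close> S(3)] unfolding to_q by (simp add: power2_eq_square)
  moreover have "\<phi> m \<le> \<phi> ps" using max \<open>m \<in> S\<close> by blast
  ultimately show ?thesis by linarith
qed

lemma projected_gradient_ascent_contraction:
  fixes \<phi> :: "'a::real_inner \<Rightarrow> real"
  assumes S: "p \<in> S" "p' \<in> S" "ps \<in> S"
    and concave: "\<And>p q. p \<in> S \<Longrightarrow> q \<in> S \<Longrightarrow>
      \<phi> q \<le> \<phi> p + G p \<bullet> (q - p) - \<kappa> / 2 * (norm (q - p))\<^sup>2"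
    and smooth: "\<And>p q. p \<in> S \<Longrightarrow> q \<in> S \<Longrightarrow>
      \<phi> p + G p \<bullet> (q - p) - L / 2 * (norm (q - p))\<^sup>2 \<le> \<phi> q"
    and step: "0 < \<alpha>" "\<alpha> * L \<le> 1" and \<kappa>: "0 < \<kappa>" "\<kappa> \<le> L"
    and proj: "\<forall>q\<in>S. (p + \<alpha> *\<^sub>R G p - p') \<bullet> (q - p') \<le> 0"
  shows "\<phi> ps - \<phi> p' \<le> (1 - \<kappa> * \<alpha>) * (\<phi> ps - \<phi> p)"
proof -
  define V where "V = p' - p"
  define D where "D = ps - p"
  define c where "c = \<alpha> * \<kappa>"
  have "c \<le> 1"
    using step \<kappa> mult_left_mono[OF \<kappa>(2), of \<alpha>] unfolding c_def by linarith
  have "G p \<bullet> V - L / 2 * (norm V)\<^sup>2 \<le> \<phi> p' - \<phi> p"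
    using smooth[OF S(1,2)] unfolding V_def by simp
  then have "2 * \<alpha> * (G p \<bullet> V - L / 2 * (norm V)\<^sup>2) \<le> 2 * \<alpha> * (\<phi> p' - \<phi> p)"
    using step(1) by (intro mult_left_mono) auto
  moreover have "\<alpha> * L * (norm V)\<^sup>2 \<le> (norm V)\<^sup>2"
    using mult_right_mono[OF step(2) zero_le_power2] by simp
  ultimately have ascent: "2 * \<alpha> * (G p \<bullet> V) - (norm V)\<^sup>2 \<le> 2 * \<alpha> * (\<phi> p' - \<phi> p)"
    by (simp add: algebra_simps)
  have "\<phi> ps - \<phi> p \<le> G p \<bullet> D - \<kappa> / 2 * (norm D)\<^sup>2"
    using concave[OF S(1,3)] unfolding D_def by simp
  then have "2 * \<alpha> * (\<phi> ps - \<phi> p) \<le> 2 * \<alpha> * (G p \<bullet> D - \<kappa> / 2 * (norm D)\<^sup>2)"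
    using step(1) by (intro mult_left_mono) auto
  then have gap: "2 * \<alpha> * (\<phi> ps - \<phi> p) \<le> 2 * \<alpha> * (G p \<bullet> D) - c * (norm D)\<^sup>2"
    unfolding c_def by (simp add: algebra_simps)
  have "(\<alpha> *\<^sub>R G p - V) \<bullet> (D - V) \<le> 0"
    using proj S(3) unfolding V_def D_def by (simp add: algebra_simps)
  then have vi_ps: "\<alpha> * (G p \<bullet> D) \<le> \<alpha> * (G p \<bullet> V) + V \<bullet> D - (norm V)\<^sup>2"
    by (simp add: inner_diff_left inner_diff_right power2_norm_eq_inner inner_commute algebra_simps)
  have "(\<alpha> *\<^sub>R G p - V) \<bullet> (- V) \<le> 0"
    using proj S(1) unfolding V_def by (simp add: algebra_simps)
  then have vi_p: "(norm V)\<^sup>2 \<le> \<alpha> * (G p \<bullet> V)"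
    by (simp add: inner_diff_left power2_norm_eq_inner)
  have "0 \<le> (V - c *\<^sub>R D) \<bullet> (V - c *\<^sub>R D)" by simp
  then have young: "2 * c * (V \<bullet> D) \<le> (norm V)\<^sup>2 + c\<^sup>2 * (norm D)\<^sup>2"
    unfolding power2_norm_eq_inner
    by (simp add: inner_diff_left inner_diff_right inner_commute power2_eq_square algebra_simps)
  have "2 * \<alpha> * (\<phi> ps - \<phi> p') \<le> 2 * (V \<bullet> D) - (norm V)\<^sup>2 - c * (norm D)\<^sup>2"
    using ascent gap vi_ps by (simp add: algebra_simps)
  then have "c * (2 * \<alpha> * (\<phi> ps - \<phi> p')) \<le> c * (2 * (V \<bullet> D) - (norm V)\<^sup>2 - c * (norm D)\<^sup>2)"
    using step(1) \<kappa>(1) unfolding c_def by (simp add: mult_left_mono)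
  also have "\<dots> \<le> (1 - c) * (norm V)\<^sup>2"
    using young by (simp add: algebra_simps power2_eq_square)
  also have "\<dots> \<le> (1 - c) * (2 * \<alpha> * (\<phi> p' - \<phi> p))"
    using ascent vi_p \<open>c \<le> 1\<close> by (intro mult_left_mono) auto
  finally have "(2 * \<alpha>) * (c * (\<phi> ps - \<phi> p')) \<le> (2 * \<alpha>) * ((1 - c) * (\<phi> p' - \<phi> p))"
    by (simp add: algebra_simps)
  then have "c * (\<phi> ps - \<phi> p') \<le> (1 - c) * (\<phi> p' - \<phi> p)"
    using step(1) by simp
  then show ?thesis unfolding c_def by (simp add: algebra_simps)
qed

lemma closest_point_descent:
  assumes "convex C" "closed C" "x \<in> C"
  shows "\<alpha> * (d \<bullet> (closest_point C (x - \<alpha> *\<^sub>R d) - x)) \<le> - (norm (closest_point C (x - \<alpha> *\<^sub>R d) - x))\<^sup>2"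
  using closest_point_dot[OF assms, of "x - \<alpha> *\<^sub>R d"]
  by (simp add: inner_diff_left inner_diff_right power2_norm_eq_inner inner_commute algebra_simps)

lemma projected_gradient_ascent_linear_convergence:
  fixes \<phi> :: "'a::real_inner \<Rightarrow> real"
  assumes ps: "ps \<in> S"
    and concave: "\<And>p q. p \<in> S \<Longrightarrow> q \<in> S \<Longrightarrow>
      \<phi> q \<le> \<phi> p + G p \<bullet> (q - p) - \<kappa> / 2 * (norm (q - p))\<^sup>2"
    and smooth: "\<And>p q. p \<in> S \<Longrightarrow> q \<in> S \<Longrightarrow>
      \<phi> p + G p \<bullet> (q - p) - L / 2 * (norm (q - p))\<^sup>2 \<le> \<phi> q"
    and step: "0 < \<alpha>" "\<alpha> * L \<le> 1" and \<kappa>: "0 < \<kappa>" "\<kappa> \<le> L"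
    and iterates: "\<And>t. t \<le> n \<Longrightarrow> P t \<in> S"
    and proj: "\<And>t q. t < n \<Longrightarrow> q \<in> S \<Longrightarrow> (P t + \<alpha> *\<^sub>R G (P t) - P (Suc t)) \<bullet> (q - P (Suc t)) \<le> 0"
  shows "\<phi> ps - \<phi> (P n) \<le> (1 - \<kappa> * \<alpha>) ^ n * (\<phi> ps - \<phi> (P 0))"
  using iterates proj
proof (induction n)
  case (Suc n)
  have "\<kappa> * \<alpha> \<le> L * \<alpha>"
    using \<kappa>(2) step(1) by (intro mult_right_mono) auto
  then have "\<kappa> * \<alpha> \<le> 1"
    using step(2) by (simp add: mult.commute)
  have "\<phi> ps - \<phi> (P (Suc n)) \<le> (1 - \<kappa> * \<alpha>) * (\<phi> ps - \<phi> (P n))"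
    using Suc.prems
    by (intro projected_gradient_ascent_contraction[OF _ _ ps concave smooth step \<kappa>]) auto
  also have "\<dots> \<le> (1 - \<kappa> * \<alpha>) * ((1 - \<kappa> * \<alpha>) ^ n * (\<phi> ps - \<phi> (P 0)))"
    using Suc \<open>\<kappa> * \<alpha> \<le> 1\<close> by (intro mult_left_mono) auto
  finally show ?case by simp
qed simp

section \<open>Parametric families of strongly concave functions\<close>

locale strongly_concave_family =
  fixes \<Phi> :: "'w::euclidean_space \<times> 'p::euclidean_space \<Rightarrow> real"
    and Gw :: "'w \<times> 'p \<Rightarrow> 'w" and Gp :: "'w \<times> 'p \<Rightarrow> 'p"
    and W :: "'w set" and S :: "'p set"
    and \<kappa> L a b :: real
  assumes has_derivative: "\<And>P. (\<Phi> has_derivative (\<lambda>H. (Gw P, Gp P) \<bullet> H)) (at P)"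
    and convex_W: "convex W"
    and S: "S \<noteq> {}" "convex S" "compact S"
    and kappa_pos: "0 < \<kappa>" and a_nonneg: "0 \<le> a" and b_nonneg: "0 \<le> b"
    and Gp_strongly_monotone: "\<And>w p q. w \<in> W \<Longrightarrow> p \<in> S \<Longrightarrow> q \<in> S \<Longrightarrow>
      (Gp (w, p) - Gp (w, q)) \<bullet> (p - q) \<le> - \<kappa> * (norm (p - q))\<^sup>2"
    and Gp_lower_monotone: "\<And>w p q. w \<in> W \<Longrightarrow> p \<in> S \<Longrightarrow> q \<in> S \<Longrightarrow>
      - L * (norm (p - q))\<^sup>2 \<le> (Gp (w, p) - Gp (w, q)) \<bullet> (p - q)"
    and Gw_lipschitz_w: "\<And>w w' p. w \<in> W \<Longrightarrow> w' \<in> W \<Longrightarrow> p \<in> S \<Longrightarrow>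
      norm (Gw (w', p) - Gw (w, p)) \<le> a * norm (w' - w)"
    and Gp_lipschitz_w: "\<And>w w' p. w \<in> W \<Longrightarrow> w' \<in> W \<Longrightarrow> p \<in> S \<Longrightarrow>
      norm (Gp (w', p) - Gp (w, p)) \<le> a * norm (w' - w)"
    and Gw_lipschitz_p: "\<And>w p q. w \<in> W \<Longrightarrow> p \<in> S \<Longrightarrow> q \<in> S \<Longrightarrow>
      norm (Gw (w, p) - Gw (w, q)) \<le> b * norm (p - q)"
begin

definition maxval :: "'w \<Rightarrow> real" where
  "maxval w = (SUP p\<in>S. \<Phi> (w, p))"

lemma has_derivative_p: "((\<lambda>p. \<Phi> (w, p)) has_derivative (\<lambda>h. Gp (w, p) \<bullet> h)) (at p)"
proof -
  have "((\<lambda>p. (w, p)) has_derivative (\<lambda>h. (0, h))) (at p)"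
    by (auto intro!: derivative_eq_intros)
  from has_derivative_compose[OF this has_derivative] show ?thesis
    by (simp add: inner_Pair)
qed

lemma has_derivative_w: "((\<lambda>w. \<Phi> (w, p)) has_derivative (\<lambda>h. Gw (w, p) \<bullet> h)) (at w)"
proof -
  have "((\<lambda>w. (w, p)) has_derivative (\<lambda>h. (h, 0))) (at w)"
    by (auto intro!: derivative_eq_intros)
  from has_derivative_compose[OF this has_derivative] show ?thesis
    by (simp add: inner_Pair)
qed

lemma concave_p:
  assumes "w \<in> W" "p \<in> S" "q \<in> S"
  shows "\<Phi> (w, q) \<le> \<Phi> (w, p) + Gp (w, p) \<bullet> (q - p) - \<kappa> / 2 * (norm (q - p))\<^sup>2"
  using gradient_monotone_quadratic_bound[OF S(2) assms(2,3) has_derivative_p,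
      where C = "- \<kappa>"] Gp_strongly_monotone[OF assms(1)]
  by simp

lemma smooth_p:
  assumes "w \<in> W" "p \<in> S" "q \<in> S"
  shows "\<Phi> (w, p) + Gp (w, p) \<bullet> (q - p) - L / 2 * (norm (q - p))\<^sup>2 \<le> \<Phi> (w, q)"
proof -
  have "- \<Phi> (w, q) \<le> - \<Phi> (w, p) + (- Gp (w, p)) \<bullet> (q - p) + L / 2 * (norm (q - p))\<^sup>2"
  proof (rule gradient_monotone_quadratic_bound[OF S(2) assms(2,3)])
    show "((\<lambda>p. - \<Phi> (w, p)) has_derivative (\<lambda>h. - Gp (w, u) \<bullet> h)) (at u)" for u
      using has_derivative_minus[OF has_derivative_p] by simp
    show "(- Gp (w, u) - - Gp (w, v)) \<bullet> (u - v) \<le> L * (norm (u - v))\<^sup>2"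
      if "u \<in> S" "v \<in> S" for u v
      using Gp_lower_monotone[OF assms(1) that] by (simp add: inner_diff_left)
  qed
  then show ?thesis by simp
qed

lemma smooth_w:
  assumes "w \<in> W" "w' \<in> W" "p \<in> S"
  shows "\<Phi> (w', p) \<le> \<Phi> (w, p) + Gw (w, p) \<bullet> (w' - w) + a / 2 * (norm (w' - w))\<^sup>2"
proof (rule gradient_monotone_quadratic_bound[OF convex_W assms(1,2) has_derivative_w])
  fix u v assume "u \<in> W" "v \<in> W"
  have "(Gw (u, p) - Gw (v, p)) \<bullet> (u - v) \<le> norm (Gw (u, p) - Gw (v, p)) * norm (u - v)"
    by (rule norm_cauchy_schwarz)
  also have "\<dots> \<le> a * norm (u - v) * norm (u - v)"
    using Gw_lipschitz_w[OF \<open>v \<in> W\<close> \<open>u \<in> W\<close> assms(3)] by (intro mult_right_mono) auto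
  finally show "(Gw (u, p) - Gw (v, p)) \<bullet> (u - v) \<le> a * (norm (u - v))\<^sup>2"
    by (simp add: power2_eq_square mult.assoc)
qed

lemma maximizer_exists: "\<exists>ps\<in>S. \<forall>q\<in>S. \<Phi> (w, q) \<le> \<Phi> (w, ps)"
proof -
  have "continuous_on S (\<lambda>p. \<Phi> (w, p))"
    by (intro continuous_at_imp_continuous_on ballI has_derivative_continuous[OF has_derivative_p])
  from continuous_attains_sup[OF S(3,1) this] show ?thesis .
qed

lemma maxval_eq:
  assumes "ps \<in> S" "\<forall>q\<in>S. \<Phi> (w, q) \<le> \<Phi> (w, ps)"
  shows "maxval w = \<Phi> (w, ps)"
  unfolding maxval_def using assms by (intro cSup_eq_maximum) auto

lemma maxval_ge:
  assumes "q \<in> S"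
  shows "\<Phi> (w, q) \<le> maxval w"
proof -
  obtain ps where "ps \<in> S" "\<forall>q\<in>S. \<Phi> (w, q) \<le> \<Phi> (w, ps)"
    using maximizer_exists by blast
  with assms show ?thesis using maxval_eq by fastforce
qed

lemma maximizer_growth:
  assumes "w \<in> W" "ps \<in> S" "\<forall>q\<in>S. \<Phi> (w, q) \<le> \<Phi> (w, ps)" "q \<in> S"
  shows "\<kappa> / 4 * (norm (q - ps))\<^sup>2 \<le> maxval w - \<Phi> (w, q)"
  using strongly_concave_maximizer_growth[OF S(2) assms(2,4,3) concave_p[OF assms(1)]]
    maxval_eq[OF assms(2,3)] by simp

lemma maximizer_lipschitz:
  assumes w: "w \<in> W" "w' \<in> W"
    and ps: "ps \<in> S" "\<forall>q\<in>S. \<Phi> (w, q) \<le> \<Phi> (w, ps)"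
    and pp: "pp \<in> S" "\<forall>q\<in>S. \<Phi> (w', q) \<le> \<Phi> (w', pp)"
  shows "norm (pp - ps) \<le> 2 * a / \<kappa> * norm (w' - w)"
proof -
  define d where "d = norm (pp - ps)"
  have "\<kappa> / 4 * d\<^sup>2 \<le> \<Phi> (w, ps) - \<Phi> (w, pp)"
    using maximizer_growth[OF w(1) ps pp(1)] maxval_eq[OF ps] by (simp add: d_def)
  moreover have "\<kappa> / 4 * d\<^sup>2 \<le> \<Phi> (w', pp) - \<Phi> (w', ps)"
    using maximizer_growth[OF w(2) pp ps(1)] maxval_eq[OF pp] by (simp add: d_def norm_minus_commute)
  moreover have "(\<Phi> (w', pp) - \<Phi> (w', ps)) - (\<Phi> (w, pp) - \<Phi> (w, ps)) \<le> a * norm (w' - w) * d"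
    unfolding d_def
    by (rule increment_difference_bound[OF S(2) ps(1) pp(1) has_derivative_p has_derivative_p])
      (use Gp_lipschitz_w w in auto)
  ultimately have "d * (\<kappa> / 2 * d) \<le> d * (a * norm (w' - w))"
    by (simp add: power2_eq_square algebra_simps)
  then have "\<kappa> / 2 * d \<le> a * norm (w' - w)"
    using a_nonneg kappa_pos by (cases "d = 0") (auto simp: d_def)
  then show ?thesis
    using kappa_pos by (simp add: d_def field_simps)
qed

lemma projected_ascent_linear_convergence:
  assumes w: "w \<in> W" and step: "0 < \<alpha>" "\<alpha> * L \<le> 1" and "\<kappa> \<le> L"
    and iterates: "\<And>t. t \<le> n \<Longrightarrow> P t \<in> S"
    and proj: "\<And>t q. t < n \<Longrightarrow> q \<in> S \<Longrightarrow>
      (P t + \<alpha> *\<^sub>R Gp (w, P t) - P (Suc t)) \<bullet> (q - P (Suc t)) \<le> 0"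
  shows "maxval w - \<Phi> (w, P n) \<le> (1 - \<kappa> * \<alpha>) ^ n * (maxval w - \<Phi> (w, P 0))"
proof -
  obtain ps where ps: "ps \<in> S" "\<forall>q\<in>S. \<Phi> (w, q) \<le> \<Phi> (w, ps)"
    using maximizer_exists by blast
  show ?thesis
    unfolding maxval_eq[OF ps]
    by (rule projected_gradient_ascent_linear_convergence[where \<phi> = "\<lambda>p. \<Phi> (w, p)"
          and G = "\<lambda>p. Gp (w, p)" and P = P and n = n, OF ps(1) concave_p[OF w] smooth_p[OF w]
          step kappa_pos \<open>\<kappa> \<le> L\<close>])
      (use iterates proj in auto)
qed

lemma maxval_le_linearization:
  assumes "w \<in> W" "w' \<in> W" "pp \<in> S" "\<forall>q\<in>S. \<Phi> (w', q) \<le> \<Phi> (w', pp)"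
  shows "maxval w' \<le> maxval w + Gw (w, pp) \<bullet> (w' - w) + a / 2 * (norm (w' - w))\<^sup>2"
  using smooth_w[OF assms(1-3)] maxval_eq[OF assms(3,4)] maxval_ge[OF assms(3), of w] by simp

lemma maxval_descent_step:
  assumes w: "w \<in> W" "w' \<in> W" and ph: "ph \<in> S"
    and step: "0 < \<alpha>" "\<alpha> * L\<theta> < 1" and L\<theta>: "a / 2 + b * (2 * a / \<kappa>) \<le> L\<theta>"
    and descent: "\<alpha> * (Gw (w, ph) \<bullet> (w' - w)) \<le> - (norm (w' - w))\<^sup>2"
  shows "(1 - \<alpha> * L\<theta>) / (2 * \<alpha>) * (norm (w' - w))\<^sup>2
    \<le> maxval w - maxval w' + 2 * \<alpha> * b\<^sup>2 / (\<kappa> * (1 - \<alpha> * L\<theta>)) * (maxval w - \<Phi> (w, ph))"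
proof -
  obtain ps where ps: "ps \<in> S" "\<forall>q\<in>S. \<Phi> (w, q) \<le> \<Phi> (w, ps)"
    using maximizer_exists by blast
  obtain pp where pp: "pp \<in> S" "\<forall>q\<in>S. \<Phi> (w', q) \<le> \<Phi> (w', pp)"
    using maximizer_exists by blast
  \<comment> \<open>Linearise \<open>maxval\<close> at the exact maximiser \<open>pp\<close> of \<open>w'\<close>; using the inexact \<open>ph\<close>
    instead costs \<open>b (\<parallel>pp - ps\<parallel> + \<parallel>ps - ph\<parallel>)\<close>.\<close>
  define N where "N = norm (w' - w)"
  define e where "e = norm (ps - ph)"
  define \<epsilon> where "\<epsilon> = (1 - \<alpha> * L\<theta>) / \<alpha>"
  have "0 < \<epsilon>" using step by (simp add: \<epsilon>_def)
  have "norm (Gw (w, pp) - Gw (w, ph)) \<le> norm (Gw (w, pp) - Gw (w, ps)) + norm (Gw (w, ps) - Gw (w, ph))"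
    using norm_triangle_ineq[of "Gw (w, pp) - Gw (w, ps)" "Gw (w, ps) - Gw (w, ph)"] by simp
  also have "\<dots> \<le> b * norm (pp - ps) + b * e"
    unfolding e_def by (intro add_mono Gw_lipschitz_p w ps pp ph)
  also have "\<dots> \<le> b * (2 * a / \<kappa> * N) + b * e"
    unfolding N_def using maximizer_lipschitz[OF w ps pp] b_nonneg by (intro add_mono mult_left_mono) auto
  finally have "(Gw (w, pp) - Gw (w, ph)) \<bullet> (w' - w) \<le> (b * (2 * a / \<kappa> * N) + b * e) * N"
    using norm_cauchy_schwarz[of "Gw (w, pp) - Gw (w, ph)" "w' - w"]
    by (smt (verit) N_def mult_right_mono norm_ge_zero)
  moreover have "Gw (w, ph) \<bullet> (w' - w) \<le> - N\<^sup>2 / \<alpha>"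
    using descent step(1) by (simp add: N_def field_simps)
  ultimately have "maxval w' - maxval w \<le> - N\<^sup>2 / \<alpha> + (b * (2 * a / \<kappa> * N) + b * e) * N + a / 2 * N\<^sup>2"
    using maxval_le_linearization[OF w pp] unfolding N_def[symmetric] by (simp add: inner_diff_left)
  also have "\<dots> = - N\<^sup>2 / \<alpha> + (a / 2 + b * (2 * a / \<kappa>)) * N\<^sup>2 + (b * e) * N"
    by (simp add: algebra_simps power2_eq_square)
  also have "\<dots> \<le> - N\<^sup>2 / \<alpha> + L\<theta> * N\<^sup>2 + (\<epsilon> / 2 * N\<^sup>2 + (b * e)\<^sup>2 / (2 * \<epsilon>))"
    using L\<theta> mult_le_young[OF \<open>0 < \<epsilon>\<close>, of "b * e" N] by (intro add_mono mult_right_mono) auto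
  also have "\<dots> = - ((1 - \<alpha> * L\<theta>) / (2 * \<alpha>) * N\<^sup>2) + (b * e)\<^sup>2 / (2 * \<epsilon>)"
    using step(1) by (simp add: \<epsilon>_def field_simps)
  also have "\<dots> \<le> - ((1 - \<alpha> * L\<theta>) / (2 * \<alpha>) * N\<^sup>2)
      + 2 * \<alpha> * b\<^sup>2 / (\<kappa> * (1 - \<alpha> * L\<theta>)) * (maxval w - \<Phi> (w, ph))"
  proof -
    have "\<kappa> / 4 * e\<^sup>2 \<le> maxval w - \<Phi> (w, ph)"
      using maximizer_growth[OF w(1) ps ph] by (simp add: e_def norm_minus_commute)
    then have "e\<^sup>2 \<le> 4 / \<kappa> * (maxval w - \<Phi> (w, ph))"
      using kappa_pos by (simp add: field_simps)
    have "(b * e)\<^sup>2 / (2 * \<epsilon>) = \<alpha> * b\<^sup>2 / (2 * (1 - \<alpha> * L\<theta>)) * e\<^sup>2"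
      by (simp add: \<epsilon>_def power_mult_distrib)
    also have "\<dots> \<le> \<alpha> * b\<^sup>2 / (2 * (1 - \<alpha> * L\<theta>)) * (4 / \<kappa> * (maxval w - \<Phi> (w, ph)))"
      using \<open>e\<^sup>2 \<le> 4 / \<kappa> * (maxval w - \<Phi> (w, ph))\<close> step by (intro mult_left_mono) auto
    also have "\<dots> = 2 * \<alpha> * b\<^sup>2 / (\<kappa> * (1 - \<alpha> * L\<theta>)) * (maxval w - \<Phi> (w, ph))"
      using kappa_pos step by (simp add: field_simps)
    finally show ?thesis by simp
  qed
  finally show ?thesis by (simp add: N_def)
qed

end

section \<open>The PG-MAD subproblem\<close>

locale pg_mad_problem =
  fixes X :: "'x::euclidean_space set" and Y :: "'y::euclidean_space set"
    and \<Lambda> :: "'l::euclidean_space set"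
    and fbar :: "'x \<times> 'y \<Rightarrow> real" and A :: "'x \<Rightarrow> 'l" and B :: "'y \<Rightarrow> 'l" and c :: 'l
    and g :: "'y \<times> 'l \<Rightarrow> real"
    and Lf Lg \<rho> \<kappa> \<tau> :: real
  assumes X: "X \<noteq> {}" "convex X" "closed X"
    and Y: "Y \<noteq> {}" "convex Y" "compact Y"
    and Lam: "\<Lambda> \<noteq> {}" "convex \<Lambda>" "compact \<Lambda>"
    and linA: "linear A" and linB: "linear B"
    and fbar_C1: "cont_diff fbar"
    and Lf_lip: "Lf-lipschitz_on (X \<times> Y \<times> \<Lambda>) (grad (fobj fbar A B c))"
    and g_C1: "cont_diff g"
    and Lg_lip: "Lg-lipschitz_on (Y \<times> \<Lambda>) (grad g)"
    and rho_pos: "0 < \<rho>" and kappa_pos: "0 < \<kappa>"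
    and tau: "Lf + 2 * \<rho> * Lg + \<kappa> \<le> \<tau>"
begin

abbreviation "F \<equiv> fobj fbar A B c"
abbreviation "LP \<equiv> Lf + 2 * \<rho> * Lg"
abbreviation "L\<theta> \<equiv> (Lf + \<rho> * Lg + 2 * \<tau>) * (1 + (Lf + 2 * \<rho> * Lg + \<tau>) / \<kappa>)"

definition Qjoint :: "('x \<times> 'y \<times> 'y \<times> 'l) \<times> ('y \<times> 'l) \<Rightarrow> real" where
  "Qjoint P = F (fst (fst P), snd P) - \<rho> * (g (snd P) - g (fst (snd (fst P)), snd (snd P)))
     - \<tau> / 2 * ((snd P - snd (snd (fst P))) \<bullet> (snd P - snd (snd (fst P))))"

definition grad_w :: "('x \<times> 'y \<times> 'y \<times> 'l) \<times> ('y \<times> 'l) \<Rightarrow> 'x \<times> 'y \<times> 'y \<times> 'l" where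
  "grad_w P = (fst (grad F (fst (fst P), snd P)),
     \<rho> *\<^sub>R fst (grad g (fst (snd (fst P)), snd (snd P))),
     \<tau> *\<^sub>R (snd P - snd (snd (fst P))))"

definition grad_p :: "('x \<times> 'y \<times> 'y \<times> 'l) \<times> ('y \<times> 'l) \<Rightarrow> 'y \<times> 'l" where
  "grad_p P = snd (grad F (fst (fst P), snd P)) - \<rho> *\<^sub>R grad g (snd P)
     + \<rho> *\<^sub>R (0, snd (grad g (fst (snd (fst P)), snd (snd P))))
     - \<tau> *\<^sub>R (snd P - snd (snd (fst P)))"

lemma Qfun_eq_Qjoint: "Qfun fbar A B c g \<rho> \<tau> x z u v y l = Qjoint ((x, z, u, v), (y, l))"
  by (simp add: Qfun_def Prho_def Qjoint_def power2_norm_eq_inner)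

lemma Lf_nonneg: "0 \<le> Lf" and Lg_nonneg: "0 \<le> Lg"
  using Lf_lip Lg_lip by (simp_all add: lipschitz_on_def)

lemma tau_pos: "0 < \<tau>"
proof -
  have "0 \<le> 2 * \<rho> * Lg" using rho_pos Lg_nonneg by simp
  then show ?thesis using tau kappa_pos Lf_nonneg by linarith
qed

lemma LP_nonneg: "0 \<le> LP"
  using Lf_nonneg Lg_nonneg rho_pos by simp

lemma L\<theta>_pos: "0 < L\<theta>"
proof -
  have "0 < Lf + \<rho> * Lg + 2 * \<tau>"
    using Lf_nonneg Lg_nonneg rho_pos tau_pos by (simp add: add_nonneg_pos)
  moreover have "0 < 1 + (LP + \<tau>) / \<kappa>"
    using LP_nonneg tau_pos kappa_pos by (simp add: add_pos_nonneg)
  ultimately show ?thesis by simp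
qed

lemma grad_F_lipschitz:
  "a \<in> X \<times> Y \<times> \<Lambda> \<Longrightarrow> b \<in> X \<times> Y \<times> \<Lambda> \<Longrightarrow> norm (grad F a - grad F b) \<le> Lf * norm (a - b)"
  using Lf_lip unfolding lipschitz_on_def dist_norm by blast

lemma grad_g_lipschitz:
  "a \<in> Y \<times> \<Lambda> \<Longrightarrow> b \<in> Y \<times> \<Lambda> \<Longrightarrow> norm (grad g a - grad g b) \<le> Lg * norm (a - b)"
  using Lg_lip unfolding lipschitz_on_def dist_norm by blast

lemma grad_F_components_lipschitz:
  assumes "a \<in> X \<times> Y \<times> \<Lambda>" "b \<in> X \<times> Y \<times> \<Lambda>"
  shows "norm (fst (grad F a) - fst (grad F b)) \<le> Lf * norm (a - b)"
    and "norm (snd (grad F a) - snd (grad F b)) \<le> Lf * norm (a - b)"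
  using order_trans[OF norm_fst_diff_le grad_F_lipschitz[OF assms]]
    order_trans[OF norm_snd_diff_le grad_F_lipschitz[OF assms]] .

lemma grad_g_components_lipschitz:
  assumes "a \<in> Y \<times> \<Lambda>" "b \<in> Y \<times> \<Lambda>"
  shows "norm (fst (grad g a) - fst (grad g b)) \<le> Lg * norm (a - b)"
    and "norm (snd (grad g a) - snd (grad g b)) \<le> Lg * norm (a - b)"
  using order_trans[OF norm_fst_diff_le grad_g_lipschitz[OF assms]]
    order_trans[OF norm_snd_diff_le grad_g_lipschitz[OF assms]] .

lemma has_derivative_g: "(g has_derivative (\<lambda>h. grad g q \<bullet> h)) (at q)"
  using g_C1 by (intro grad_has_derivative) (metis cont_diff_def prod.collapse)

lemma has_derivative_F: "(F has_derivative (\<lambda>h. grad F q \<bullet> h)) (at q)"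
proof (rule grad_has_derivative)
  have linear: "bounded_linear A" "bounded_linear B"
    using linA linB by (simp_all add: linear_conv_bounded_linear)
  have fbar: "(fbar has_derivative (\<lambda>h. grad fbar p \<bullet> h)) (at p)" for p
    using fbar_C1 by (intro grad_has_derivative) (metis cont_diff_def prod.collapse)
  have "((\<lambda>q. fbar (fst q, fst (snd q))) has_derivative
      (\<lambda>h. grad fbar (fst q, fst (snd q)) \<bullet> (fst h, fst (snd h)))) (at q)"
    by (rule has_derivative_compose[OF _ fbar]) (auto intro!: derivative_eq_intros)
  moreover have "((\<lambda>q. snd (snd q) \<bullet> (A (fst q) + B (fst (snd q)) - c)) has_derivative
      (\<lambda>h. snd (snd q) \<bullet> (A (fst h) + B (fst (snd h)))
         + snd (snd h) \<bullet> (A (fst q) + B (fst (snd q)) - c))) (at q)"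
    by (auto intro!: derivative_eq_intros bounded_linear.has_derivative[OF linear(1)]
        bounded_linear.has_derivative[OF linear(2)])
  ultimately have "((\<lambda>q. fbar (fst q, fst (snd q)) + snd (snd q) \<bullet> (A (fst q) + B (fst (snd q)) - c))
      has_derivative (\<lambda>h. grad fbar (fst q, fst (snd q)) \<bullet> (fst h, fst (snd h))
        + (snd (snd q) \<bullet> (A (fst h) + B (fst (snd h)))
           + snd (snd h) \<bullet> (A (fst q) + B (fst (snd q)) - c)))) (at q)"
    by (rule has_derivative_add)
  then show "F differentiable (at q)"
    unfolding differentiable_def fobj_def[abs_def] by blast
qed

lemma has_derivative_Qjoint: "(Qjoint has_derivative (\<lambda>H. (grad_w P, grad_p P) \<bullet> H)) (at P)"
proof -
  have F: "((\<lambda>P. F (fst (fst P), snd P)) has_derivative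
      (\<lambda>H. grad F (fst (fst P), snd P) \<bullet> (fst (fst H), snd H))) (at P)"
    by (rule has_derivative_compose[OF _ has_derivative_F]) (auto intro!: derivative_eq_intros)
  have g_p: "((\<lambda>P. g (snd P)) has_derivative (\<lambda>H. grad g (snd P) \<bullet> snd H)) (at P)"
    by (rule has_derivative_compose[OF _ has_derivative_g]) (auto intro!: derivative_eq_intros)
  have g_z: "((\<lambda>P. g (fst (snd (fst P)), snd (snd P))) has_derivative
      (\<lambda>H. grad g (fst (snd (fst P)), snd (snd P)) \<bullet> (fst (snd (fst H)), snd (snd H)))) (at P)"
    by (rule has_derivative_compose[OF _ has_derivative_g]) (auto intro!: derivative_eq_intros)
  have prox: "((\<lambda>P. (snd P - snd (snd (fst P))) \<bullet> (snd P - snd (snd (fst P)))) has_derivative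
      (\<lambda>H. 2 * ((snd P - snd (snd (fst P))) \<bullet> (snd H - snd (snd (fst H)))))) (at P)"
    by (auto intro!: derivative_eq_intros simp: inner_commute)
  have "(Qjoint has_derivative (\<lambda>H. grad F (fst (fst P), snd P) \<bullet> (fst (fst H), snd H)
      - \<rho> * (grad g (snd P) \<bullet> snd H
             - grad g (fst (snd (fst P)), snd (snd P)) \<bullet> (fst (snd (fst H)), snd (snd H)))
      - \<tau> / 2 * (2 * ((snd P - snd (snd (fst P))) \<bullet> (snd H - snd (snd (fst H))))))) (at P)"
    unfolding Qjoint_def by (intro has_derivative_diff has_derivative_mult_right F g_p g_z prox)
  then show ?thesis
    by (rule has_derivative_eq_rhs)
      (auto simp: fun_eq_iff grad_w_def grad_p_def inner_diff_left inner_diff_right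
        inner_add_left inner_Pair_0 inner_prod_def algebra_simps)
qed

lemma grad_Qfun_p:
  "grad (\<lambda>p. Qfun fbar A B c g \<rho> \<tau> x z u v (fst p) (snd p)) q = grad_p ((x, z, u, v), q)"
proof (rule grad_eqI)
  have "((\<lambda>p. ((x, z, u, v), p)) has_derivative (\<lambda>h. (0, h))) (at q)"
    by (auto intro!: derivative_eq_intros)
  from has_derivative_compose[OF this has_derivative_Qjoint]
  have "((\<lambda>p. Qjoint ((x, z, u, v), p)) has_derivative (\<lambda>h. grad_p ((x, z, u, v), q) \<bullet> h)) (at q)"
    by (simp add: inner_Pair)
  moreover have "(\<lambda>p. Qfun fbar A B c g \<rho> \<tau> x z u v (fst p) (snd p)) = (\<lambda>p. Qjoint ((x, z, u, v), p))"
    by (simp add: Qfun_eq_Qjoint)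
  ultimately show "((\<lambda>p. Qfun fbar A B c g \<rho> \<tau> x z u v (fst p) (snd p)) has_derivative
      (\<lambda>h. grad_p ((x, z, u, v), q) \<bullet> h)) (at q)"
    by simp
qed

lemma grad_p_without_prox_lipschitz:
  assumes "x \<in> X" "z \<in> Y" "p \<in> Y \<times> \<Lambda>" "p' \<in> Y \<times> \<Lambda>"
  shows "norm (grad_p ((x, z, uv), p) - grad_p ((x, z, uv), p') + \<tau> *\<^sub>R (p - p')) \<le> LP * norm (p - p')"
proof -
  obtain y l where p: "p = (y, l)" by (cases p)
  obtain y' l' where p': "p' = (y', l')" by (cases p')
  have "norm (snd (grad F (x, p)) - snd (grad F (x, p'))) \<le> Lf * norm (p - p')"
    using grad_F_components_lipschitz(2)[of "(x, p)" "(x, p')"] assms by simp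
  moreover have "norm (\<rho> *\<^sub>R (grad g p - grad g p')) \<le> \<rho> * (Lg * norm (p - p'))"
    using grad_g_lipschitz[OF assms(3,4)] rho_pos by (simp add: mult_left_mono)
  moreover have "norm (\<rho> *\<^sub>R ((0::'y), snd (grad g (z, l)) - snd (grad g (z, l')))) \<le> \<rho> * (Lg * norm (p - p'))"
  proof -
    have "norm (snd (grad g (z, l)) - snd (grad g (z, l'))) \<le> Lg * norm ((z, l) - (z, l'))"
      using assms p p' by (intro grad_g_components_lipschitz) auto
    also have "\<dots> \<le> Lg * norm (p - p')"
      using Lg_nonneg norm_snd_diff_le[of p p'] by (intro mult_left_mono) (simp_all add: p p')
    finally show ?thesis using rho_pos by (simp add: mult_left_mono)
  qed
  moreover have "grad_p ((x, z, uv), p) - grad_p ((x, z, uv), p') + \<tau> *\<^sub>R (p - p') =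
     (snd (grad F (x, p)) - snd (grad F (x, p'))) - \<rho> *\<^sub>R (grad g p - grad g p')
     + \<rho> *\<^sub>R (0, snd (grad g (z, l)) - snd (grad g (z, l')))"
    by (simp add: grad_p_def p p' algebra_simps)
  moreover have "norm (a - b + d) \<le> norm a + norm b + norm d" for a b d :: "'y \<times> 'l"
    using norm_triangle_ineq[of "a - b" d] norm_triangle_ineq4[of a b] by linarith
  ultimately have "norm (grad_p ((x, z, uv), p) - grad_p ((x, z, uv), p') + \<tau> *\<^sub>R (p - p'))
      \<le> Lf * norm (p - p') + \<rho> * (Lg * norm (p - p')) + \<rho> * (Lg * norm (p - p'))"
    by (smt (verit))
  then show ?thesis by (simp add: algebra_simps)
qed

lemma grad_p_monotone:
  assumes "x \<in> X" "z \<in> Y" "p \<in> Y \<times> \<Lambda>" "p' \<in> Y \<times> \<Lambda>"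
  shows "(grad_p ((x, z, uv), p) - grad_p ((x, z, uv), p')) \<bullet> (p - p') \<le> - \<kappa> * (norm (p - p'))\<^sup>2"
    and "- (LP + \<tau>) * (norm (p - p'))\<^sup>2 \<le> (grad_p ((x, z, uv), p) - grad_p ((x, z, uv), p')) \<bullet> (p - p')"
proof -
  define V where "V = grad_p ((x, z, uv), p) - grad_p ((x, z, uv), p') + \<tau> *\<^sub>R (p - p')"
  have "\<bar>V \<bullet> (p - p')\<bar> \<le> norm V * norm (p - p')"
    by (rule Cauchy_Schwarz_ineq2)
  also have "\<dots> \<le> LP * norm (p - p') * norm (p - p')"
    unfolding V_def using grad_p_without_prox_lipschitz[OF assms] by (simp add: mult_right_mono)
  finally have "\<bar>V \<bullet> (p - p')\<bar> \<le> LP * (norm (p - p'))\<^sup>2"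
    by (simp add: power2_eq_square mult.assoc)
  moreover have "(grad_p ((x, z, uv), p) - grad_p ((x, z, uv), p')) \<bullet> (p - p')
      = V \<bullet> (p - p') - \<tau> * (norm (p - p'))\<^sup>2"
    by (simp add: V_def inner_diff_left inner_add_left power2_norm_eq_inner)
  moreover have "(LP - \<tau>) * (norm (p - p'))\<^sup>2 \<le> - \<kappa> * (norm (p - p'))\<^sup>2"
    using tau by (intro mult_right_mono) auto
  ultimately show "(grad_p ((x, z, uv), p) - grad_p ((x, z, uv), p')) \<bullet> (p - p') \<le> - \<kappa> * (norm (p - p'))\<^sup>2"
    and "- (LP + \<tau>) * (norm (p - p'))\<^sup>2 \<le> (grad_p ((x, z, uv), p) - grad_p ((x, z, uv), p')) \<bullet> (p - p')"
    by (simp_all add: algebra_simps abs_le_iff)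
qed

lemma grad_p_lipschitz_w:
  assumes "x \<in> X" "x' \<in> X" "z \<in> Y" "z' \<in> Y" "p \<in> Y \<times> \<Lambda>"
  shows "norm (grad_p ((x', z', uv'), p) - grad_p ((x, z, uv), p))
    \<le> (Lf + \<rho> * Lg + \<tau>) * norm ((x', z', uv') - (x, z, uv))"
proof -
  obtain y l where p: "p = (y, l)" by (cases p)
  define N where "N = norm ((x', z', uv') - (x, z, uv))"
  have "norm (snd (grad F (x', p)) - snd (grad F (x, p))) \<le> Lf * norm (x' - x)"
    using grad_F_components_lipschitz(2)[of "(x', p)" "(x, p)"] assms by simp
  also have "\<dots> \<le> Lf * N"
    unfolding N_def by (rule mult_left_mono[OF norm_components_le(1) Lf_nonneg])
  finally have "norm (snd (grad F (x', p)) - snd (grad F (x, p))) \<le> Lf * N" .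
  moreover have "norm (\<rho> *\<^sub>R ((0::'y), snd (grad g (z', l)) - snd (grad g (z, l)))) \<le> \<rho> * (Lg * N)"
  proof -
    have "norm (snd (grad g (z', l)) - snd (grad g (z, l))) \<le> Lg * norm (z' - z)"
      using grad_g_components_lipschitz(2)[of "(z', l)" "(z, l)"] assms p by simp
    also have "\<dots> \<le> Lg * N"
      unfolding N_def by (rule mult_left_mono[OF norm_components_le(2) Lg_nonneg])
    finally show ?thesis using rho_pos by (simp add: mult_left_mono)
  qed
  moreover have "norm (\<tau> *\<^sub>R (uv' - uv)) \<le> \<tau> * N"
    using norm_components_le(3) tau_pos by (simp add: N_def mult_left_mono)
  moreover have "grad_p ((x', z', uv'), p) - grad_p ((x, z, uv), p) =
     (snd (grad F (x', p)) - snd (grad F (x, p))) + \<rho> *\<^sub>R (0, snd (grad g (z', l)) - snd (grad g (z, l)))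
     + \<tau> *\<^sub>R (uv' - uv)"
    by (simp add: grad_p_def p algebra_simps)
  moreover have "norm (a + b + d) \<le> norm a + norm b + norm d" for a b d :: "'y \<times> 'l"
    using norm_triangle_ineq[of "a + b" d] norm_triangle_ineq[of a b] by linarith
  ultimately have "norm (grad_p ((x', z', uv'), p) - grad_p ((x, z, uv), p)) \<le> Lf * N + \<rho> * (Lg * N) + \<tau> * N"
    by (smt (verit))
  then show ?thesis by (simp add: N_def algebra_simps)
qed

lemma grad_w_lipschitz_w:
  assumes "x \<in> X" "x' \<in> X" "z \<in> Y" "z' \<in> Y" "p \<in> Y \<times> \<Lambda>"
  shows "norm (grad_w ((x', z', uv'), p) - grad_w ((x, z, uv), p))
    \<le> (Lf + \<rho> * Lg + \<tau>) * norm ((x', z', uv') - (x, z, uv))"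
proof -
  obtain y l where p: "p = (y, l)" by (cases p)
  define N where "N = norm ((x', z', uv') - (x, z, uv))"
  have "norm (fst (grad F (x', p)) - fst (grad F (x, p))) \<le> Lf * norm (x' - x)"
    using grad_F_components_lipschitz(1)[of "(x', p)" "(x, p)"] assms by simp
  also have "\<dots> \<le> Lf * N"
    unfolding N_def by (rule mult_left_mono[OF norm_components_le(1) Lf_nonneg])
  finally have "norm (fst (grad F (x', p)) - fst (grad F (x, p))) \<le> Lf * N" .
  moreover have "norm (\<rho> *\<^sub>R (fst (grad g (z', l)) - fst (grad g (z, l)))) \<le> \<rho> * (Lg * N)"
  proof -
    have "norm (fst (grad g (z', l)) - fst (grad g (z, l))) \<le> Lg * norm (z' - z)"
      using grad_g_components_lipschitz(1)[of "(z', l)" "(z, l)"] assms p by simp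
    also have "\<dots> \<le> Lg * N"
      unfolding N_def by (rule mult_left_mono[OF norm_components_le(2) Lg_nonneg])
    finally show ?thesis using rho_pos by (simp add: mult_left_mono)
  qed
  moreover have "norm (\<tau> *\<^sub>R (uv - uv')) \<le> \<tau> * N"
  proof -
    have "norm (\<tau> *\<^sub>R (uv - uv')) = \<tau> * norm (uv' - uv)"
      using tau_pos by (simp add: norm_minus_commute)
    then show ?thesis
      using norm_components_le(3) tau_pos by (simp add: N_def mult_left_mono)
  qed
  moreover have "grad_w ((x', z', uv'), p) - grad_w ((x, z, uv), p) =
     (fst (grad F (x', p)) - fst (grad F (x, p)), \<rho> *\<^sub>R (fst (grad g (z', l)) - fst (grad g (z, l))),
      \<tau> *\<^sub>R (uv - uv'))"
    by (simp add: grad_w_def p algebra_simps)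
  moreover have "norm (a, b, d) \<le> norm a + norm b + norm d" for a :: 'x and b :: 'y and d :: "'y \<times> 'l"
    using norm_Pair_le[of a "(b, d)"] norm_Pair_le[of b d] by linarith
  ultimately have "norm (grad_w ((x', z', uv'), p) - grad_w ((x, z, uv), p)) \<le> Lf * N + \<rho> * (Lg * N) + \<tau> * N"
    by (smt (verit))
  then show ?thesis by (simp add: N_def algebra_simps)
qed

lemma grad_w_lipschitz_p:
  assumes "x \<in> X" "z \<in> Y" "p \<in> Y \<times> \<Lambda>" "p' \<in> Y \<times> \<Lambda>"
  shows "norm (grad_w ((x, z, uv), p) - grad_w ((x, z, uv), p'))
    \<le> sqrt (Lf\<^sup>2 + \<rho>\<^sup>2 * Lg\<^sup>2 + \<tau>\<^sup>2) * norm (p - p')"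
proof -
  obtain y l where p: "p = (y, l)" by (cases p)
  obtain y' l' where p': "p' = (y', l')" by (cases p')
  define N where "N = norm (p - p')"
  have "norm (fst (grad F (x, p)) - fst (grad F (x, p'))) \<le> Lf * N"
    using grad_F_components_lipschitz(1)[of "(x, p)" "(x, p')"] assms by (simp add: N_def)
  then have F: "(norm (fst (grad F (x, p)) - fst (grad F (x, p'))))\<^sup>2 \<le> Lf\<^sup>2 * N\<^sup>2"
    by (simp add: power_mono flip: power_mult_distrib)
  have "norm (fst (grad g (z, l)) - fst (grad g (z, l'))) \<le> Lg * N"
    using grad_g_components_lipschitz(1)[of "(z, l)" "(z, l')"] assms p p'
      mult_left_mono[OF norm_snd_diff_le[of p p'] Lg_nonneg]
    by (simp add: N_def)
  then have "(norm (fst (grad g (z, l)) - fst (grad g (z, l'))))\<^sup>2 \<le> Lg\<^sup>2 * N\<^sup>2"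
    by (simp add: power_mono flip: power_mult_distrib)
  then have g: "(norm (\<rho> *\<^sub>R (fst (grad g (z, l)) - fst (grad g (z, l')))))\<^sup>2 \<le> \<rho>\<^sup>2 * Lg\<^sup>2 * N\<^sup>2"
    by (simp add: power_mult_distrib mult_left_mono mult.assoc)
  have "grad_w ((x, z, uv), p) - grad_w ((x, z, uv), p') =
     (fst (grad F (x, p)) - fst (grad F (x, p')), \<rho> *\<^sub>R (fst (grad g (z, l)) - fst (grad g (z, l'))),
      \<tau> *\<^sub>R (p - p'))"
    by (simp add: grad_w_def p p' algebra_simps)
  then have "(norm (grad_w ((x, z, uv), p) - grad_w ((x, z, uv), p')))\<^sup>2
      = (norm (fst (grad F (x, p)) - fst (grad F (x, p'))))\<^sup>2
        + (norm (\<rho> *\<^sub>R (fst (grad g (z, l)) - fst (grad g (z, l')))))\<^sup>2 + \<tau>\<^sup>2 * N\<^sup>2"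
    using tau_pos by (simp add: norm_Pair N_def power_mult_distrib)
  also have "\<dots> \<le> (Lf\<^sup>2 + \<rho>\<^sup>2 * Lg\<^sup>2 + \<tau>\<^sup>2) * N\<^sup>2"
    using F g by (simp add: algebra_simps)
  finally have "(norm (grad_w ((x, z, uv), p) - grad_w ((x, z, uv), p')))\<^sup>2
      \<le> (Lf\<^sup>2 + \<rho>\<^sup>2 * Lg\<^sup>2 + \<tau>\<^sup>2) * N\<^sup>2" .
  then have "norm (grad_w ((x, z, uv), p) - grad_w ((x, z, uv), p'))
      \<le> sqrt ((Lf\<^sup>2 + \<rho>\<^sup>2 * Lg\<^sup>2 + \<tau>\<^sup>2) * N\<^sup>2)"
    by (rule real_le_rsqrt)
  then show ?thesis
    by (simp add: N_def real_sqrt_mult)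
qed

sublocale family: strongly_concave_family Qjoint grad_w grad_p "X \<times> Y \<times> UNIV" "Y \<times> \<Lambda>" \<kappa> "LP + \<tau>"
  "Lf + \<rho> * Lg + \<tau>" "sqrt (Lf\<^sup>2 + \<rho>\<^sup>2 * Lg\<^sup>2 + \<tau>\<^sup>2)"
proof
  show "convex (X \<times> Y \<times> (UNIV :: ('y \<times> 'l) set))"
    using X Y by (intro convex_Times) auto
  show "Y \<times> \<Lambda> \<noteq> {}" "convex (Y \<times> \<Lambda>)" "compact (Y \<times> \<Lambda>)"
    using Y Lam by (auto intro: convex_Times compact_Times)
  show "0 \<le> Lf + \<rho> * Lg + \<tau>"
    using Lf_nonneg Lg_nonneg rho_pos tau_pos by (intro add_nonneg_nonneg mult_nonneg_nonneg) auto
qed (use has_derivative_Qjoint kappa_pos grad_p_monotone grad_w_lipschitz_w grad_p_lipschitz_w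
      grad_w_lipschitz_p in force)+

lemma vartheta_eq_maxval: "vartheta fbar A B c g \<rho> \<tau> Y \<Lambda> w = family.maxval w"
  unfolding vartheta_def family.maxval_def
  by (cases w) (simp add: Qfun_eq_Qjoint case_prod_beta)

lemma L\<theta>_bound:
  "(Lf + \<rho> * Lg + \<tau>) / 2 + sqrt (Lf\<^sup>2 + \<rho>\<^sup>2 * Lg\<^sup>2 + \<tau>\<^sup>2) * (2 * (Lf + \<rho> * Lg + \<tau>) / \<kappa>) \<le> L\<theta>"
proof -
  define c where "c = Lf + \<rho> * Lg"
  define b where "b = sqrt (Lf\<^sup>2 + \<rho>\<^sup>2 * Lg\<^sup>2 + \<tau>\<^sup>2)"
  have "0 \<le> \<rho> * Lg" using rho_pos Lg_nonneg by simp
  moreover have "2 * \<rho> * Lg = 2 * (\<rho> * Lg)" by simp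
  ultimately have "0 \<le> c" "c \<le> \<tau>" "c + \<tau> \<le> LP + \<tau>"
    using Lf_nonneg tau kappa_pos unfolding c_def by linarith+
  have "Lf\<^sup>2 + \<rho>\<^sup>2 * Lg\<^sup>2 \<le> c\<^sup>2"
    using Lf_nonneg \<open>0 \<le> \<rho> * Lg\<close> by (simp add: c_def power2_eq_square algebra_simps)
  moreover have "c\<^sup>2 \<le> c * \<tau>"
    using \<open>0 \<le> c\<close> \<open>c \<le> \<tau>\<close> by (simp add: power2_eq_square mult_left_mono)
  moreover have "((c + 2 * \<tau>) / 2)\<^sup>2 = c\<^sup>2 / 4 + c * \<tau> + \<tau>\<^sup>2"
    by (simp add: power2_eq_square field_simps)
  ultimately have "Lf\<^sup>2 + \<rho>\<^sup>2 * Lg\<^sup>2 + \<tau>\<^sup>2 \<le> ((c + 2 * \<tau>) / 2)\<^sup>2"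
    using zero_le_power2[of c] by linarith
  then have "b \<le> (c + 2 * \<tau>) / 2"
    unfolding b_def using \<open>0 \<le> c\<close> tau_pos by (intro real_le_lsqrt) auto
  then have "2 * b * (c + \<tau>) \<le> (c + 2 * \<tau>) * (c + \<tau>)"
    using \<open>0 \<le> c\<close> tau_pos by (intro mult_right_mono) auto
  then have "2 * b * (c + \<tau>) / \<kappa> \<le> (c + 2 * \<tau>) * (c + \<tau>) / \<kappa>"
    using kappa_pos by (intro divide_right_mono) auto
  moreover have "b * (2 * (c + \<tau>) / \<kappa>) = 2 * b * (c + \<tau>) / \<kappa>"
    by simp
  ultimately have "b * (2 * (c + \<tau>) / \<kappa>) \<le> (c + 2 * \<tau>) * (c + \<tau>) / \<kappa>"
    by (simp only:)
  also have "\<dots> \<le> (c + 2 * \<tau>) * (LP + \<tau>) / \<kappa>"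
    using \<open>c + \<tau> \<le> LP + \<tau>\<close> \<open>0 \<le> c\<close> tau_pos kappa_pos
    by (intro divide_right_mono mult_left_mono) auto
  finally have "(c + \<tau>) / 2 + b * (2 * (c + \<tau>) / \<kappa>) \<le> (c + 2 * \<tau>) + (c + 2 * \<tau>) * (LP + \<tau>) / \<kappa>"
    using \<open>0 \<le> c\<close> tau_pos by (intro add_mono) auto
  also have "\<dots> = L\<theta>"
    by (simp add: c_def algebra_simps)
  finally show ?thesis unfolding c_def b_def by (simp add: add.assoc)
qed

end

section \<open>The PG-MAD iterates\<close>

locale pg_mad = pg_mad_problem X Y \<Lambda> fbar A B c g Lf Lg \<rho> \<kappa> \<tau>
  for X :: "'x::euclidean_space set" and Y :: "'y::euclidean_space set"
    and \<Lambda> :: "'l::euclidean_space set"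
    and fbar A B c g Lf Lg \<rho> \<kappa> \<tau> +
  fixes \<alpha>x \<alpha>y :: real and T K :: nat
    and x :: "nat \<Rightarrow> 'x" and z u :: "nat \<Rightarrow> 'y" and v :: "nat \<Rightarrow> 'l"
    and y :: "nat \<Rightarrow> 'y" and lam :: "nat \<Rightarrow> 'l"
    and yin :: "nat \<Rightarrow> nat \<Rightarrow> 'y" and lin :: "nat \<Rightarrow> nat \<Rightarrow> 'l"
  assumes ay: "0 < \<alpha>y" "\<alpha>y < 1 / (LP + \<tau>)"
    and ax: "0 < \<alpha>x" "\<alpha>x < 1 / L\<theta>"
    and init: "x 0 \<in> X" "z 0 \<in> Y" "y 0 \<in> Y" "lam 0 \<in> \<Lambda>"
    and inner0: "\<And>k. k < K \<Longrightarrow> yin k 0 = y k \<and> lin k 0 = lam k"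
    and inner_step: "\<And>k t. k < K \<Longrightarrow> t < T \<Longrightarrow>
        yin k (Suc t) = closest_point Y (yin k t + \<alpha>y *\<^sub>R
          fst (grad (\<lambda>p. Qfun fbar A B c g \<rho> \<tau> (x k) (z k) (u k) (v k) (fst p) (snd p)) (yin k t, lin k t))) \<and>
        lin k (Suc t) = closest_point \<Lambda> (lin k t + \<alpha>y *\<^sub>R
          snd (grad (\<lambda>p. Qfun fbar A B c g \<rho> \<tau> (x k) (z k) (u k) (v k) (fst p) (snd p)) (yin k t, lin k t)))"
    and outer_yl: "\<And>k. k < K \<Longrightarrow> y (Suc k) = yin k T \<and> lam (Suc k) = lin k T"
    and outer_x: "\<And>k. k < K \<Longrightarrow>
        x (Suc k) = closest_point X (x k - \<alpha>x *\<^sub>R fst (grad F (x k, y (Suc k), lam (Suc k))))"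
    and outer_z: "\<And>k. k < K \<Longrightarrow>
        z (Suc k) = closest_point Y (z k - (\<alpha>x * \<rho>) *\<^sub>R fst (grad g (z k, lam (Suc k))))"
    and outer_u: "\<And>k. k < K \<Longrightarrow> u (Suc k) = (1 + \<alpha>x * \<tau>) *\<^sub>R u k - (\<alpha>x * \<tau>) *\<^sub>R y (Suc k)"
    and outer_v: "\<And>k. k < K \<Longrightarrow> v (Suc k) = (1 + \<alpha>x * \<tau>) *\<^sub>R v k - (\<alpha>x * \<tau>) *\<^sub>R lam (Suc k)"
begin

definition w :: "nat \<Rightarrow> 'x \<times> 'y \<times> 'y \<times> 'l" where
  "w k = (x k, z k, u k, v k)"

definition p :: "nat \<Rightarrow> nat \<Rightarrow> 'y \<times> 'l" where
  "p k t = (yin k t, lin k t)"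

lemma closed_sets: "closed X" "closed Y" "closed \<Lambda>"
  using X Y Lam by (simp_all add: compact_imp_closed)

lemma inner_iterates_in_S:
  assumes "k < K" "y k \<in> Y" "lam k \<in> \<Lambda>" "t \<le> T"
  shows "p k t \<in> Y \<times> \<Lambda>"
  using assms(4)
proof (induction t)
  case 0
  then show ?case using inner0[OF assms(1)] assms(2,3) by (simp add: p_def)
next
  case (Suc t)
  then show ?case
    using inner_step[OF assms(1), of t] closest_point_in_set[OF closed_sets(2) Y(1)]
      closest_point_in_set[OF closed_sets(3) Lam(1)]
    by (simp add: p_def)
qed

lemma iterates_in_sets:
  "k \<le> K \<Longrightarrow> x k \<in> X \<and> z k \<in> Y \<and> y k \<in> Y \<and> lam k \<in> \<Lambda>"
proof (induction k)
  case (Suc k)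
  then have "k < K" by simp
  have "(y (Suc k), lam (Suc k)) \<in> Y \<times> \<Lambda>"
    using inner_iterates_in_S[OF \<open>k < K\<close> _ _ order_refl] Suc outer_yl[OF \<open>k < K\<close>]
    by (simp add: p_def)
  then show ?case
    using outer_x[OF \<open>k < K\<close>] outer_z[OF \<open>k < K\<close>] closest_point_in_set[OF closed_sets(1) X(1)]
      closest_point_in_set[OF closed_sets(2) Y(1)]
    by simp
qed (use init in simp)

lemma inner_step_projection:
  assumes "k < K" "t < T" "q \<in> Y \<times> \<Lambda>"
  shows "(p k t + \<alpha>y *\<^sub>R grad_p (w k, p k t) - p k (Suc t)) \<bullet> (q - p k (Suc t)) \<le> 0"
proof -
  obtain qy ql where q: "q = (qy, ql)" "qy \<in> Y" "ql \<in> \<Lambda>" using assms(3) by auto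
  define G where "G = grad_p (w k, p k t)"
  have step: "yin k (Suc t) = closest_point Y (yin k t + \<alpha>y *\<^sub>R fst G)"
    "lin k (Suc t) = closest_point \<Lambda> (lin k t + \<alpha>y *\<^sub>R snd G)"
    using inner_step[OF assms(1,2)] by (simp_all add: grad_Qfun_p G_def w_def p_def)
  have "(yin k t + \<alpha>y *\<^sub>R fst G - yin k (Suc t)) \<bullet> (qy - yin k (Suc t)) \<le> 0"
    unfolding step by (rule closest_point_dot[OF Y(2) closed_sets(2) q(2)])
  moreover have "(lin k t + \<alpha>y *\<^sub>R snd G - lin k (Suc t)) \<bullet> (ql - lin k (Suc t)) \<le> 0"
    unfolding step by (rule closest_point_dot[OF Lam(2) closed_sets(3) q(3)])
  ultimately show ?thesis
    unfolding G_def by (simp add: p_def q(1) inner_prod_def)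
qed

lemma inner_loop_gap:
  assumes "k < K"
  shows "family.maxval (w k) - Qjoint (w k, (y (Suc k), lam (Suc k)))
    \<le> (1 - \<kappa> * \<alpha>y) ^ T * (family.maxval (w k) - Qjoint (w k, (y k, lam k)))"
proof -
  have k: "x k \<in> X" "z k \<in> Y" "y k \<in> Y" "lam k \<in> \<Lambda>"
    using iterates_in_sets[of k] assms by auto
  have "0 < LP + \<tau>"
    using LP_nonneg tau_pos by linarith
  then have "\<alpha>y * (LP + \<tau>) \<le> 1"
    using ay by (simp add: field_simps)
  moreover have "\<kappa> \<le> LP + \<tau>"
    using tau LP_nonneg by linarith
  ultimately have "family.maxval (w k) - Qjoint (w k, p k T)
      \<le> (1 - \<kappa> * \<alpha>y) ^ T * (family.maxval (w k) - Qjoint (w k, p k 0))"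
    using k inner_iterates_in_S[OF assms] inner_step_projection[OF assms]
    by (intro family.projected_ascent_linear_convergence) (auto simp: w_def ay(1))
  then show ?thesis
    using inner0[OF assms] outer_yl[OF assms] by (simp add: p_def)
qed

lemma outer_step_descent:
  assumes "k < K"
  shows "\<alpha>x * (grad_w (w k, (y (Suc k), lam (Suc k))) \<bullet> (w (Suc k) - w k))
    \<le> - (norm (w (Suc k) - w k))\<^sup>2"
proof -
  have k: "x k \<in> X" "z k \<in> Y" using iterates_in_sets[of k] assms by auto
  define dx where "dx = fst (grad F (x k, y (Suc k), lam (Suc k)))"
  define dz where "dz = \<rho> *\<^sub>R fst (grad g (z k, lam (Suc k)))"
  define du where "du = \<tau> *\<^sub>R ((y (Suc k), lam (Suc k)) - (u k, v k))"
  have x: "\<alpha>x * (dx \<bullet> (x (Suc k) - x k)) \<le> - (norm (x (Suc k) - x k))\<^sup>2"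
    unfolding outer_x[OF assms] dx_def by (rule closest_point_descent[OF X(2) closed_sets(1) k(1)])
  have z: "\<alpha>x * (dz \<bullet> (z (Suc k) - z k)) \<le> - (norm (z (Suc k) - z k))\<^sup>2"
    using closest_point_descent[OF Y(2) closed_sets(2) k(2), of \<alpha>x dz]
    unfolding outer_z[OF assms] dz_def by (simp add: scaleR_scaleR)
  have uv_step: "(u (Suc k), v (Suc k)) - (u k, v k) = - (\<alpha>x *\<^sub>R du)"
    using outer_u[OF assms] outer_v[OF assms] by (simp add: du_def algebra_simps)
  have uv: "\<alpha>x * (du \<bullet> ((u (Suc k), v (Suc k)) - (u k, v k)))
      = - (norm ((u (Suc k), v (Suc k)) - (u k, v k)))\<^sup>2"
    unfolding uv_step power2_norm_eq_inner by simp
  have "grad_w (w k, (y (Suc k), lam (Suc k))) = (dx, dz, du)"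
    by (simp add: grad_w_def w_def dx_def dz_def du_def)
  then show ?thesis
    using x z uv by (simp add: w_def norm_Pair inner_Pair distrib_left)
qed

lemma descent_inequality:
  assumes "k < K"
  shows "(1 - \<alpha>x * L\<theta>) / (4 * \<alpha>x) * (norm (w (Suc k) - w k))\<^sup>2
    \<le> vartheta fbar A B c g \<rho> \<tau> Y \<Lambda> (w k) - vartheta fbar A B c g \<rho> \<tau> Y \<Lambda> (w (Suc k))
      + 2 * \<alpha>x * (Lf\<^sup>2 + \<rho>\<^sup>2 * Lg\<^sup>2 + \<tau>\<^sup>2) / (\<kappa> * (1 - \<alpha>x * L\<theta>)) * (1 - \<kappa> * \<alpha>y) ^ T
        * (vartheta fbar A B c g \<rho> \<tau> Y \<Lambda> (w k) - Qjoint (w k, (y k, lam k)))"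
proof -
  have mem: "x k \<in> X" "z k \<in> Y" "x (Suc k) \<in> X" "z (Suc k) \<in> Y"
    "(y (Suc k), lam (Suc k)) \<in> Y \<times> \<Lambda>"
    using iterates_in_sets[of k] iterates_in_sets[of "Suc k"] assms by auto
  have step: "\<alpha>x * L\<theta> < 1"
    using ax L\<theta>_pos by (simp add: field_simps)
  define C where "C = 2 * \<alpha>x * (Lf\<^sup>2 + \<rho>\<^sup>2 * Lg\<^sup>2 + \<tau>\<^sup>2) / (\<kappa> * (1 - \<alpha>x * L\<theta>))"
  have "0 \<le> C"
    unfolding C_def using ax(1) kappa_pos step by simp
  have "(1 - \<alpha>x * L\<theta>) / (4 * \<alpha>x) * (norm (w (Suc k) - w k))\<^sup>2
      \<le> (1 - \<alpha>x * L\<theta>) / (2 * \<alpha>x) * (norm (w (Suc k) - w k))\<^sup>2"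
    using ax(1) step by (intro mult_right_mono divide_left_mono) auto
  also have "\<dots> \<le> family.maxval (w k) - family.maxval (w (Suc k))
      + C * (family.maxval (w k) - Qjoint (w k, (y (Suc k), lam (Suc k))))"
    unfolding C_def
    using family.maxval_descent_step[OF _ _ mem(5) ax(1) step L\<theta>_bound outer_step_descent[OF assms]]
      mem by (simp add: w_def power2_eq_square)
  also have "\<dots> \<le> family.maxval (w k) - family.maxval (w (Suc k))
      + C * ((1 - \<kappa> * \<alpha>y) ^ T * (family.maxval (w k) - Qjoint (w k, (y k, lam k))))"
    using inner_loop_gap[OF assms] \<open>0 \<le> C\<close> by (intro add_left_mono mult_left_mono)
  finally show ?thesis
    by (simp add: vartheta_eq_maxval C_def mult.assoc)
qed

end

theorem mainTheorem8:
  fixes X :: "'x::euclidean_space set" and Y :: "'y::euclidean_space set"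
    and \<Lambda> :: "'l::euclidean_space set"
    and fbar :: "'x \<times> 'y \<Rightarrow> real" and A :: "'x \<Rightarrow> 'l" and B :: "'y \<Rightarrow> 'l" and c :: 'l
    and g :: "'y \<times> 'l \<Rightarrow> real"
    and Lf Lg \<rho> \<kappa> \<tau> \<alpha>x \<alpha>y :: real and T K :: nat
    and x :: "nat \<Rightarrow> 'x" and z u :: "nat \<Rightarrow> 'y" and v :: "nat \<Rightarrow> 'l"
    and y :: "nat \<Rightarrow> 'y" and lam :: "nat \<Rightarrow> 'l"
    and yin :: "nat \<Rightarrow> nat \<Rightarrow> 'y" and lin :: "nat \<Rightarrow> nat \<Rightarrow> 'l"
  defines "LP \<equiv> Lf + 2 * \<rho> * Lg"
    and "Lth \<equiv> (Lf + \<rho> * Lg + 2 * \<tau>) * (1 + (Lf + 2 * \<rho> * Lg + \<tau>) / \<kappa>)"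
    and "Q \<equiv> Qfun fbar A B c g \<rho> \<tau>"
    and "\<theta> \<equiv> vartheta fbar A B c g \<rho> \<tau> Y \<Lambda>"
    and "F \<equiv> fobj fbar A B c"
  assumes X: "X \<noteq> {}" "convex X" "compact X"
    and Y: "Y \<noteq> {}" "convex Y" "compact Y"
    and Lam: "\<Lambda> \<noteq> {}" "convex \<Lambda>" "compact \<Lambda>"
    and linA: "linear A" and linB: "linear B"
    and fbar_C1: "cont_diff fbar"
    and Lf_pos: "Lf > 0"
    and Lf_lip: "Lf-lipschitz_on (X \<times> Y \<times> \<Lambda>) (grad F)"
    and g_C1: "cont_diff g"
    and Lg_lip: "Lg-lipschitz_on (Y \<times> \<Lambda>) (grad g)"
    and g_convex: "\<forall>l\<in>\<Lambda>. convex_on Y (\<lambda>y'. g (y', l))"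
    and saddle: "\<exists>zs\<in>Y. \<exists>ls\<in>\<Lambda>.
        g (zs, ls) = (SUP l\<in>\<Lambda>. INF z'\<in>Y. g (z', l)) \<and>
        g (zs, ls) = (INF z'\<in>Y. SUP l\<in>\<Lambda>. g (z', l))"
    and rho_pos: "\<rho> > 0" and kappa_pos: "\<kappa> > 0"
    and tau: "\<tau> \<ge> LP + \<kappa>"
    and ay: "0 < \<alpha>y" "\<alpha>y < 1 / (LP + \<tau>)"
    and ax: "0 < \<alpha>x" "\<alpha>x < 1 / Lth"
    and TK: "T > 1" "K > 1"
    and init: "x 0 \<in> X" "z 0 \<in> Y" "y 0 \<in> Y" "lam 0 \<in> \<Lambda>"
    and inner0: "\<And>k. k < K \<Longrightarrow> yin k 0 = y k \<and> lin k 0 = lam k"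
    and inner_step: "\<And>k t. k < K \<Longrightarrow> t < T \<Longrightarrow>
        yin k (Suc t) = closest_point Y (yin k t + \<alpha>y *\<^sub>R
          fst (grad (\<lambda>p. Q (x k) (z k) (u k) (v k) (fst p) (snd p)) (yin k t, lin k t))) \<and>
        lin k (Suc t) = closest_point \<Lambda> (lin k t + \<alpha>y *\<^sub>R
          snd (grad (\<lambda>p. Q (x k) (z k) (u k) (v k) (fst p) (snd p)) (yin k t, lin k t)))"
    and outer_yl: "\<And>k. k < K \<Longrightarrow> y (Suc k) = yin k T \<and> lam (Suc k) = lin k T"
    and outer_x: "\<And>k. k < K \<Longrightarrow>
        x (Suc k) = closest_point X (x k - \<alpha>x *\<^sub>R fst (grad F (x k, y (Suc k), lam (Suc k))))"
    and outer_z: "\<And>k. k < K \<Longrightarrow>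
        z (Suc k) = closest_point Y (z k - (\<alpha>x * \<rho>) *\<^sub>R fst (grad g (z k, lam (Suc k))))"
    and outer_u: "\<And>k. k < K \<Longrightarrow> u (Suc k) = (1 + \<alpha>x * \<tau>) *\<^sub>R u k - (\<alpha>x * \<tau>) *\<^sub>R y (Suc k)"
    and outer_v: "\<And>k. k < K \<Longrightarrow> v (Suc k) = (1 + \<alpha>x * \<tau>) *\<^sub>R v k - (\<alpha>x * \<tau>) *\<^sub>R lam (Suc k)"
  shows "\<forall>k < K.
    (1 - \<alpha>x * Lth) / (4 * \<alpha>x) *
      (norm ((x (Suc k), z (Suc k), u (Suc k), v (Suc k)) - (x k, z k, u k, v k)))\<^sup>2
    \<le> \<theta> (x k, z k, u k, v k) - \<theta> (x (Suc k), z (Suc k), u (Suc k), v (Suc k))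
      + 2 * \<alpha>x * (Lf\<^sup>2 + \<rho>\<^sup>2 * Lg\<^sup>2 + \<tau>\<^sup>2) / (\<kappa> * (1 - \<alpha>x * Lth))
        * (1 - \<kappa> * \<alpha>y) ^ T
        * (\<theta> (x k, z k, u k, v k) - Q (x k) (z k) (u k) (v k) (y k) (lam k))"
proof -
  note hypotheses = X(1,2) compact_imp_closed[OF X(3)] Y Lam linA linB fbar_C1 Lf_lip g_C1 Lg_lip
    rho_pos kappa_pos tau ay ax init inner0 inner_step outer_yl outer_x outer_z outer_u outer_v
  interpret pg_mad X Y \<Lambda> fbar A B c g Lf Lg \<rho> \<kappa> \<tau> \<alpha>x \<alpha>y T K x z u v y lam yin lin
    by (intro pg_mad.intro pg_mad_problem.intro pg_mad_axioms.intro) (fact hypotheses[unfolded assms(1-5)])+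
  show ?thesis
    unfolding assms(1-5) using descent_inequality by (simp only: w_def Qfun_eq_Qjoint) blast
qed

end
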